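(* For every zero-normalized $\Gamma$-semimodule $\Delta$ one has $\widehat{\widehat{\Delta}}=\Delta$.
   Context: Let $m,n$ be coprime positive integers and $\Gamma=\{am+bn:a,b\in\mathbb{Z}_{\ge0}\}$. A $\Gamma$-semimodule is $\Delta\subset\mathbb{Z}_{\ge0}$ with $\Delta+\Gamma\subset\Delta$; it is zero-normalized if $\min\Delta=0$. The dual is $\Delta^*=\{\varphi\in\mathbb{Z}:\varphi+\Delta\subset\Gamma\}$, and $\widehat\Delta=\Delta^*-\min\Delta^*$ is its zero-normalization; equivalently $\widehat\Delta=\max(\mathbb{Z}\setminus\Delta)-(\mathbb{Z}\setminus\Delta)$. *)

theory Defs
  imports Main
begin

definition Gam :: "int \<Rightarrow> int \<Rightarrow> int set" where
  "Gam m n = {a * m + b * n | a b. a \<ge> 0 \<and> b \<ge> 0}"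

definition semimodule :: "int \<Rightarrow> int \<Rightarrow> int set \<Rightarrow> bool" where
  "semimodule m n D \<longleftrightarrow> D \<subseteq> {0..} \<and> (\<forall>x\<in>D. \<forall>g\<in>Gam m n. x + g \<in> D)"

definition zero_normalized :: "int \<Rightarrow> int \<Rightarrow> int set \<Rightarrow> bool" where
  "zero_normalized m n D \<longleftrightarrow> semimodule m n D \<and> 0 \<in> D \<and> (\<forall>x\<in>D. 0 \<le> x)"

definition dual :: "int \<Rightarrow> int \<Rightarrow> int set \<Rightarrow> int set" where
  "dual m n D = {phi. \<forall>d\<in>D. phi + d \<in> Gam m n}"

definition hat :: "int \<Rightarrow> int \<Rightarrow> int set \<Rightarrow> int set" where
  "hat m n D = (\<lambda>x. x - Inf (dual m n D)) ` dual m n D"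

end

theory Submission
  imports Defs
begin

text \<open>Everything rests on the symmetry of \<open>\<Gamma>\<close> under \<open>x \<mapsto> F - x\<close>, where
  \<open>F = mn - m - n\<close> is the Frobenius number: \<open>x \<in> \<Gamma>\<close> iff \<open>F - x \<notin> \<Gamma>\<close>. It turns the dual of a
  \<open>\<Gamma>\<close>-closed set \<open>E\<close> into the reflected complement \<open>{\<phi>. F - \<phi> \<notin> E}\<close>, an involution, so
  \<open>E** = E\<close>. Since dualization maps translates to translates, normalizing \<open>\<Delta>\<close> twice gives a
  translate of \<open>\<Delta>** = \<Delta>\<close>, and comparing minima it is \<open>\<Delta> - min \<Delta> = \<Delta>\<close>.\<close>

definition frobenius :: "int \<Rightarrow> int \<Rightarrow> int" where
  "frobenius m n = m * n - m - n"

definition Gam_closed :: "int \<Rightarrow> int \<Rightarrow> int set \<Rightarrow> bool" where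
  "Gam_closed m n E \<longleftrightarrow> (\<forall>x\<in>E. \<forall>g\<in>Gam m n. x + g \<in> E)"

lemma zero_in_Gam: "0 \<in> Gam m n"
  unfolding Gam_def by force

lemma Gam_add: "x \<in> Gam m n \<Longrightarrow> y \<in> Gam m n \<Longrightarrow> x + y \<in> Gam m n"
  unfolding Gam_def
proof clarify
  fix a b c d :: int
  assume "a \<ge> 0" "b \<ge> 0" "c \<ge> 0" "d \<ge> 0"
  then show "\<exists>a' b'. a * m + b * n + (c * m + d * n) = a' * m + b' * n \<and> a' \<ge> 0 \<and> b' \<ge> 0"
    by (intro exI[of _ "a + c"] exI[of _ "b + d"]) (auto simp: algebra_simps)
qed

lemma frobenius_diff_notin_Gam:
  assumes m: "m > 0" and n: "n > 0" and cop: "coprime m n" and x: "x \<in> Gam m n"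
  shows "frobenius m n - x \<notin> Gam m n"
proof
  assume "frobenius m n - x \<in> Gam m n"
  with x have "frobenius m n \<in> Gam m n"
    using Gam_add by fastforce
  then obtain a b where ab: "frobenius m n = a * m + b * n" "a \<ge> 0" "b \<ge> 0"
    unfolding Gam_def by auto
  have sum: "(a + 1) * m + (b + 1) * n = m * n"
    using ab(1) by (simp add: frobenius_def algebra_simps)
  \<comment> \<open>coprimality forces \<open>n\<close> to divide \<open>a + 1\<close>, so the first summand alone is already \<open>\<ge> mn\<close>\<close>
  have "(a + 1) * m = n * (m - (b + 1))"
    using sum by (simp add: algebra_simps)
  then have "n dvd (a + 1) * m"
    by simp
  then have "n dvd a + 1"
    using cop by (metis coprime_commute coprime_dvd_mult_left_iff)
  then have "n \<le> a + 1"
    using ab(2) by (intro zdvd_imp_le) auto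
  then have "n * m \<le> (a + 1) * m"
    using m by (intro mult_right_mono) auto
  moreover have "0 < (b + 1) * n"
    using ab(3) n by simp
  ultimately show False
    using sum by (simp add: algebra_simps)
qed

lemma frobenius_diff_in_Gam:
  assumes n: "n > 0" and cop: "coprime m n" and x: "x \<notin> Gam m n"
  shows "frobenius m n - x \<in> Gam m n"
proof -
  obtain u v where uv: "u * m + v * n = 1"
    using bezout_int[of m n] cop by auto
  \<comment> \<open>write \<open>x = a m + b n\<close> with \<open>0 \<le> a < n\<close>; since \<open>x \<notin> \<Gamma>\<close>, necessarily \<open>b < 0\<close>\<close>
  define a where "a = (x * u) mod n"
  have a: "0 \<le> a" "a < n"
    using n unfolding a_def by auto
  have "n dvd x * u - a"
    unfolding a_def by (simp add: mod_eq_dvd_iff)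
  moreover have "x - a * m = x * (u * m + v * n) - a * m"
    using uv by simp
  then have "x - a * m = (x * u - a) * m + x * v * n"
    by (simp add: algebra_simps)
  ultimately have "n dvd x - a * m"
    by simp
  then obtain b where b: "x = a * m + b * n"
    by (auto simp: dvd_def algebra_simps)
  have "b < 0"
    using x a b unfolding Gam_def by force
  have "frobenius m n - x = (n - 1 - a) * m + (- 1 - b) * n"
    using b by (simp add: frobenius_def algebra_simps)
  with a \<open>b < 0\<close> show ?thesis
    unfolding Gam_def by force
qed

lemma dual_eq_reflected_complement:
  assumes m: "m > 0" and n: "n > 0" and cop: "coprime m n" and E: "Gam_closed m n E"
  shows "dual m n E = {\<phi>. frobenius m n - \<phi> \<notin> E}"
proof (intro set_eqI iffI CollectI)
  fix \<phi> assume \<phi>: "\<phi> \<in> dual m n E"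
  show "frobenius m n - \<phi> \<notin> E"
  proof
    assume "frobenius m n - \<phi> \<in> E"
    with \<phi> have "\<phi> + (frobenius m n - \<phi>) \<in> Gam m n"
      unfolding dual_def by blast
    moreover have "frobenius m n - 0 \<notin> Gam m n"
      using frobenius_diff_notin_Gam[OF m n cop zero_in_Gam] .
    ultimately show False
      by simp
  qed
next
  fix \<phi> assume \<phi>: "\<phi> \<in> {\<phi>. frobenius m n - \<phi> \<notin> E}"
  show "\<phi> \<in> dual m n E"
    unfolding dual_def
  proof (intro CollectI ballI)
    fix d assume d: "d \<in> E"
    show "\<phi> + d \<in> Gam m n"
    proof (rule ccontr)
      assume "\<phi> + d \<notin> Gam m n"
      then have "frobenius m n - (\<phi> + d) \<in> Gam m n"
        by (rule frobenius_diff_in_Gam[OF n cop])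
      with d E have "d + (frobenius m n - (\<phi> + d)) \<in> E"
        unfolding Gam_closed_def by blast
      with \<phi> show False
        by simp
    qed
  qed
qed

lemma Gam_closed_dual: "Gam_closed m n (dual m n E)"
  unfolding Gam_closed_def dual_def
  using Gam_add by (fastforce simp: algebra_simps)

lemma dual_dual:
  assumes "m > 0" "n > 0" "coprime m n" "Gam_closed m n E"
  shows "dual m n (dual m n E) = E"
proof -
  have "dual m n (dual m n E) = {\<phi>. frobenius m n - \<phi> \<notin> dual m n E}"
    using dual_eq_reflected_complement[OF assms(1-3) Gam_closed_dual] .
  also have "\<dots> = E"
    unfolding dual_eq_reflected_complement[OF assms] by simp
  finally show ?thesis .
qed

lemma dual_shift: "dual m n ((\<lambda>x. x - c) ` E) = (\<lambda>x. c + x) ` dual m n E"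
proof (intro set_eqI iffI)
  fix \<psi> assume "\<psi> \<in> dual m n ((\<lambda>x. x - c) ` E)"
  then have "\<psi> - c \<in> dual m n E"
    unfolding dual_def by (auto simp: algebra_simps)
  then show "\<psi> \<in> (\<lambda>x. c + x) ` dual m n E"
    by (intro image_eqI[of _ _ "\<psi> - c"]) auto
qed (auto simp: dual_def algebra_simps)

lemma hat_hat:
  assumes m: "m > 0" and n: "n > 0" and cop: "coprime m n"
    and E: "Gam_closed m n E" "E \<noteq> {}" "bdd_below E"
  shows "hat m n (hat m n E) = (\<lambda>x. x - Inf E) ` E"
proof -
  define \<mu> where "\<mu> = Inf (dual m n E)"
  have hat_E: "hat m n E = (\<lambda>x. x - \<mu>) ` dual m n E"
    unfolding hat_def \<mu>_def ..
  have dual_hat_E: "dual m n (hat m n E) = (\<lambda>x. \<mu> + x) ` E"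
    unfolding hat_E dual_shift dual_dual[OF m n cop E(1)] ..
  have "Inf ((\<lambda>x. \<mu> + x) ` E) = \<mu> + Inf E"
    using Inf_add_eq[of id E \<mu>] E(2,3) by auto
  then have "hat m n (hat m n E) = (\<lambda>x. x - (\<mu> + Inf E)) ` (\<lambda>x. \<mu> + x) ` E"
    unfolding hat_def[of m n "hat m n E"] dual_hat_E by simp
  then show ?thesis
    by (simp add: image_image)
qed

theorem mainTheorem10:
  fixes m n :: int and D :: "int set"
  assumes "m > 0" and "n > 0" and "coprime m n"
    and "zero_normalized m n D"
  shows "hat m n (hat m n D) = D"
proof -
  have D: "Gam_closed m n D" "0 \<in> D" "\<forall>x\<in>D. 0 \<le> x"
    using assms(4) unfolding zero_normalized_def semimodule_def Gam_closed_def by auto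
  then have "bdd_below D" and "Inf D = 0"
    by (auto intro: bdd_belowI cInf_eq_minimum)
  then show ?thesis
    using hat_hat[OF assms(1-3) D(1)] D(2) by auto
qed

end
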